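(* Let $\mathcal{D}$ be an $S(2,k,v)$ and $G_0=0$-$\mathrm{BIG}(\mathcal{D})$. If $v>k^3-2k^2+2k$, then every maximum independent set of $G_0$ is of the form $T(x)$ for some element $x$, and consequently $\alpha(G_0)=\frac{v-1}{k-1}$.
   Context: A Steiner $2$-design $S(2,k,v)$ ($2<k<v$) is a pair $(V,\mathcal{B})$ with $|V|=v$ and $\mathcal{B}$ a collection of $k$-subsets of $V$ (blocks) such that every $2$-subset of $V$ lies in exactly one block. The $0$-block intersection graph $0$-$\mathrm{BIG}(\mathcal{D})$ has the blocks as vertices, two blocks adjacent iff they are disjoint. For an element $x\in V$, $T(x)$ denotes the set of the $\frac{v-1}{k-1}$ blocks containing $x$. $\alpha(G)$ is the independence number. *)

theory Defs
  imports Main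
begin

definition steiner_2_design :: "nat \<Rightarrow> 'a set \<Rightarrow> 'a set set \<Rightarrow> bool" where
  "steiner_2_design k V \<B> \<longleftrightarrow>
     finite V \<and> 2 < k \<and> k < card V \<and>
     (\<forall>B\<in>\<B>. B \<subseteq> V \<and> card B = k) \<and>
     (\<forall>P. P \<subseteq> V \<and> card P = 2 \<longrightarrow> (\<exists>!B. B \<in> \<B> \<and> P \<subseteq> B))"

definition big0_adj :: "'a set set \<Rightarrow> 'a set \<Rightarrow> 'a set \<Rightarrow> bool" where
  "big0_adj \<B> B C \<longleftrightarrow> B \<in> \<B> \<and> C \<in> \<B> \<and> B \<noteq> C \<and> B \<inter> C = {}"

definition big0_indep :: "'a set set \<Rightarrow> 'a set set \<Rightarrow> bool" where
  "big0_indep \<B> S \<longleftrightarrow> S \<subseteq> \<B> \<and> (\<forall>B\<in>S. \<forall>C\<in>S. \<not> big0_adj \<B> B C)"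

definition big0_max_indep :: "'a set set \<Rightarrow> 'a set set \<Rightarrow> bool" where
  "big0_max_indep \<B> S \<longleftrightarrow> big0_indep \<B> S \<and>
     (\<forall>S'. big0_indep \<B> S' \<longrightarrow> card S' \<le> card S)"

definition big0_alpha :: "'a set set \<Rightarrow> nat" where
  "big0_alpha \<B> = Max (card ` {S. big0_indep \<B> S})"

definition T_blocks :: "'a set set \<Rightarrow> 'a \<Rightarrow> 'a set set" where
  "T_blocks \<B> x = {B \<in> \<B>. x \<in> B}"

end

theory Submission
  imports Defs
begin

(* Proof idea (Erdos-Ko-Rado type argument for Steiner 2-designs).
   An independent set of the 0-block intersection graph is a family of pairwise
   intersecting blocks.  Two facts about such families are proved first:
   (1) every point x lies in exactly r = (v-1)/(k-1) blocks, and T(x) is independent;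
   (2) an intersecting family S containing a block B such that no point of B lies
       in every member of S has at most k(k-1)+1 members: each member other than B
       passes through one of the k points of B, and through a fixed point x of B
       pass at most k members (they meet a member E avoiding x in distinct points),
       one of them being B itself.
   If v > k^3-2k^2+2k then r > k(k-1)+1, so a maximum independent set S (which has
   at least r members) cannot satisfy (2); hence some point x lies in all its
   members, S is contained in T(x), and maximality gives S = T(x).  Since maximum
   independent sets exist, the independence number equals r. *)

lemma steiner_2_designD:
  assumes "steiner_2_design k V \<B>"
  shows "finite V" "2 < k" "k < card V"
    and "\<And>B. B \<in> \<B> \<Longrightarrow> B \<subseteq> V" "\<And>B. B \<in> \<B> \<Longrightarrow> card B = k"
    and "\<And>P. P \<subseteq> V \<Longrightarrow> card P = 2 \<Longrightarrow> \<exists>!B. B \<in> \<B> \<and> P \<subseteq> B"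
  using assms unfolding steiner_2_design_def by blast+

lemma steiner_pair_block:
  assumes "steiner_2_design k V \<B>" "x \<in> V" "y \<in> V" "x \<noteq> y"
  obtains B where "B \<in> \<B>" "x \<in> B" "y \<in> B"
proof -
  have "\<exists>!B. B \<in> \<B> \<and> {x, y} \<subseteq> B"
    using assms by (intro steiner_2_designD(6)) auto
  then show ?thesis using that by blast
qed

lemma steiner_block_unique:
  assumes D: "steiner_2_design k V \<B>" and "B \<in> \<B>" "C \<in> \<B>"
    and "p \<in> B" "p \<in> C" "q \<in> B" "q \<in> C" "p \<noteq> q"
  shows "B = C"
proof -
  have "\<exists>!B. B \<in> \<B> \<and> {p, q} \<subseteq> B"
    using steiner_2_designD(4)[OF D \<open>B \<in> \<B>\<close>] assms(4,6,8)
    by (intro steiner_2_designD(6)[OF D]) auto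
  then show ?thesis using assms(2-7) by blast
qed

lemma steiner_block_finite:
  assumes "steiner_2_design k V \<B>" "B \<in> \<B>"
  shows "finite B"
  using steiner_2_designD(2,5)[OF assms(1)] assms(2) by (metis card.infinite not_less0)

lemma steiner_blocks_finite:
  assumes "steiner_2_design k V \<B>"
  shows "finite \<B>"
proof -
  have "\<B> \<subseteq> Pow V" using steiner_2_designD(4)[OF assms] by auto
  then show ?thesis using steiner_2_designD(1)[OF assms] finite_subset by blast
qed

text \<open>The blocks through x partition V - {x} into sets of size k - 1, so
  every point lies in r = (v - 1)/(k - 1) blocks.\<close>
lemma replication_number:
  assumes D: "steiner_2_design k V \<B>" and x: "x \<in> V"
  shows "card (T_blocks \<B> x) * (k - 1) = card V - 1"
proof -
  let ?T = "T_blocks \<B> x"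
  have finV: "finite V" using steiner_2_designD(1)[OF D] .
  have finT: "finite ?T"
    using steiner_blocks_finite[OF D] unfolding T_blocks_def by auto
  have T_block: "B \<in> \<B>" "x \<in> B" if "B \<in> ?T" for B
    using that unfolding T_blocks_def by auto
  have cover: "V - {x} = (\<Union>B\<in>?T. B - {x})"
  proof
    show "V - {x} \<subseteq> (\<Union>B\<in>?T. B - {x})"
    proof
      fix y assume y: "y \<in> V - {x}"
      then obtain B where "B \<in> \<B>" "x \<in> B" "y \<in> B"
        using steiner_pair_block[OF D x] by blast
      then show "y \<in> (\<Union>B\<in>?T. B - {x})" using y unfolding T_blocks_def by auto
    qed
    show "(\<Union>B\<in>?T. B - {x}) \<subseteq> V - {x}"
      using steiner_2_designD(4)[OF D] T_block by blast
  qed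
  have disjoint: "(B - {x}) \<inter> (C - {x}) = {}" if "B \<in> ?T" "C \<in> ?T" "B \<noteq> C" for B C
    using steiner_block_unique[OF D, of B C x] T_block that by blast
  have block_card: "card (B - {x}) = k - 1" if "B \<in> ?T" for B
    using steiner_2_designD(5)[OF D] T_block[OF that] by simp
  have finite_blocks: "finite (B - {x})" if "B \<in> ?T" for B
    using steiner_block_finite[OF D] T_block[OF that] by blast
  have "card V - 1 = card (\<Union>B\<in>?T. B - {x})"
    using cover finV x by (metis card_Diff_singleton)
  also have "\<dots> = (\<Sum>B\<in>?T. card (B - {x}))"
    using finT finite_blocks disjoint by (intro card_UN_disjoint) auto
  also have "\<dots> = card ?T * (k - 1)" using block_card by simp
  finally show ?thesis by simp
qed

text \<open>Blocks through a point x that all meet a block E avoiding x meet E in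
  pairwise distinct points; hence there are at most k of them.\<close>
lemma pencil_meeting_block_card:
  assumes D: "steiner_2_design k V \<B>"
    and F: "F \<subseteq> \<B>" "\<And>C. C \<in> F \<Longrightarrow> x \<in> C" "\<And>C. C \<in> F \<Longrightarrow> C \<inter> E \<noteq> {}"
    and E: "E \<in> \<B>" "x \<notin> E"
  shows "card F \<le> k"
proof -
  define meet where "meet C = (SOME z. z \<in> C \<inter> E)" for C
  have meet_in: "meet C \<in> C \<inter> E" if "C \<in> F" for C
    unfolding meet_def using F(3)[OF that] by (metis some_in_eq)
  have "inj_on meet F"
  proof (rule inj_onI)
    fix C C' assume C: "C \<in> F" "C' \<in> F" and same: "meet C = meet C'"
    have "meet C \<in> C" "meet C \<in> C'" "meet C \<noteq> x"
      using meet_in[OF C(1)] meet_in[OF C(2)] same E(2) by auto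
    then show "C = C'"
      using steiner_block_unique[OF D, of C C' x "meet C"] C F(1,2) by blast
  qed
  moreover have "meet ` F \<subseteq> E" using meet_in by auto
  moreover have "finite E" "card E = k"
    using steiner_block_finite[OF D E(1)] steiner_2_designD(5)[OF D E(1)] .
  ultimately show ?thesis by (metis card_inj_on_le)
qed

text \<open>An intersecting family in which no point of the block B is common to all
  members is small: every member other than B passes through a point of B, and
  through each point of B pass at most k - 1 members besides B.\<close>
lemma intersecting_family_without_common_point:
  assumes D: "steiner_2_design k V \<B>" and S: "S \<subseteq> \<B>"
    and intersecting: "\<And>B C. B \<in> S \<Longrightarrow> C \<in> S \<Longrightarrow> B \<inter> C \<noteq> {}"
    and B: "B \<in> S" and no_common: "\<forall>x\<in>B. \<exists>E\<in>S. x \<notin> E"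
  shows "card S \<le> k * (k - 1) + 1"
proof -
  define pencil where "pencil x = {C \<in> S. x \<in> C}" for x
  have finB: "finite B" "card B = k"
    using steiner_block_finite[OF D] steiner_2_designD(5)[OF D] B S by auto
  have pencil_card: "card (pencil x - {B}) \<le> k - 1" if x: "x \<in> B" for x
  proof -
    obtain E where "E \<in> S" "x \<notin> E" using no_common x by blast
    then have "card (pencil x) \<le> k"
      using pencil_meeting_block_card[OF D, of "pencil x" x E] S intersecting
      unfolding pencil_def by blast
    moreover have "B \<in> pencil x" using B x unfolding pencil_def by simp
    moreover have "finite (pencil x)"
      using steiner_blocks_finite[OF D] S unfolding pencil_def by (auto intro: finite_subset)
    ultimately show ?thesis by simp
  qed
  let ?U = "\<Union>x\<in>B. pencil x - {B}"
  have "S \<subseteq> insert B ?U"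
    using intersecting[OF B] unfolding pencil_def by blast
  moreover have "finite ?U"
    by (rule finite_subset[OF _ steiner_blocks_finite[OF D]]) (use S in \<open>auto simp: pencil_def\<close>)
  ultimately have "card S \<le> card (insert B ?U)" by (intro card_mono) auto
  also have "\<dots> = card ?U + 1" by (subst card_insert_disjoint[OF \<open>finite ?U\<close>]) auto
  also have "card ?U \<le> (\<Sum>x\<in>B. card (pencil x - {B}))"
    using finB(1) by (rule card_UN_le)
  also have "\<dots> \<le> (\<Sum>x\<in>B. k - 1)" using pencil_card by (rule sum_mono)
  also have "\<dots> = k * (k - 1)" using finB by simp
  finally show ?thesis by simp
qed

text \<open>If r(k - 1) = v - 1 and v > k^3 - 2k^2 + 2k = (k - 1)(k(k - 1) + 1) + 1,
  then r exceeds the bound k(k - 1) + 1 for non-trivial intersecting families.\<close>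
lemma replication_exceeds_bound:
  fixes k v r :: nat
  assumes k: "1 < k" and v: "0 < v" and r: "r * (k - 1) = v - 1"
    and large: "int v > int k ^ 3 - 2 * int k ^ 2 + 2 * int k"
  shows "k * (k - 1) + 1 < r"
proof -
  have r_int: "int r * (int k - 1) = int v - 1"
    using arg_cong[OF r, of int] k v by (simp add: of_nat_diff)
  have "(int k - 1) * (int k * (int k - 1) + 1) = int k ^ 3 - 2 * int k ^ 2 + 2 * int k - 1"
    by (simp add: algebra_simps power2_eq_square power3_eq_cube)
  then have "(int k - 1) * (int k * (int k - 1) + 1) < (int k - 1) * int r"
    using r_int large by (simp add: mult.commute)
  then have "int k * (int k - 1) + 1 < int r" using k by simp
  moreover have "int (k * (k - 1) + 1) = int k * (int k - 1) + 1" using k by simp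
  ultimately show ?thesis by linarith
qed

lemma T_blocks_indep: "big0_indep \<B> (T_blocks \<B> x)"
  unfolding big0_indep_def big0_adj_def T_blocks_def by auto

lemma big0_max_indepD:
  assumes "big0_max_indep \<B> S"
  shows "big0_indep \<B> S" "S \<subseteq> \<B>" "\<And>S'. big0_indep \<B> S' \<Longrightarrow> card S' \<le> card S"
  using assms unfolding big0_max_indep_def big0_indep_def by simp_all

text \<open>The members of an independent set pairwise intersect (distinct members by
  independence, and a block meets itself because it is non-empty).\<close>
lemma indep_intersecting:
  assumes D: "steiner_2_design k V \<B>" and S: "big0_indep \<B> S"
    and "B \<in> S" "C \<in> S"
  shows "B \<inter> C \<noteq> {}"
proof (cases "B = C")
  case True
  have "card B = k" using steiner_2_designD(5)[OF D] S \<open>B \<in> S\<close> by (auto simp: big0_indep_def)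
  then show ?thesis using True steiner_2_designD(2)[OF D] by auto
next
  case False
  then show ?thesis using S assms(3,4) unfolding big0_indep_def big0_adj_def by blast
qed

lemma max_indep_exists:
  assumes "finite \<B>"
  obtains S where "big0_max_indep \<B> S" "big0_alpha \<B> = card S"
proof -
  let ?I = "{S. big0_indep \<B> S}"
  have "?I \<subseteq> Pow \<B>" unfolding big0_indep_def by blast
  then have "finite ?I" using assms by (meson finite_Pow_iff finite_subset)
  moreover have "T_blocks \<B> undefined \<in> ?I" by (simp add: T_blocks_indep)
  ultimately have "Max (card ` ?I) \<in> card ` ?I" by (intro Max_in) blast+
  then obtain S where S: "S \<in> ?I" "card S = Max (card ` ?I)" by auto
  then have "big0_max_indep \<B> S"
    unfolding big0_max_indep_def using \<open>finite ?I\<close> by auto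
  then show ?thesis using that S unfolding big0_alpha_def by simp
qed

lemma large_max_indep_is_pencil:
  assumes D: "steiner_2_design k V \<B>" and S: "big0_max_indep \<B> S"
    and large: "k * (k - 1) + 1 < card S"
  shows "\<exists>x\<in>V. S = T_blocks \<B> x"
proof -
  note indep = big0_max_indepD(1)[OF S] and SB = big0_max_indepD(2)[OF S]
  have "S \<noteq> {}" using large by (metis card.empty not_less0)
  then obtain B where B: "B \<in> S" by blast
  have "\<exists>x\<in>B. \<forall>E\<in>S. x \<in> E"
  proof (rule ccontr)
    assume "\<not> (\<exists>x\<in>B. \<forall>E\<in>S. x \<in> E)"
    then have no_common: "\<forall>x\<in>B. \<exists>E\<in>S. x \<notin> E" by blast
    have "card S \<le> k * (k - 1) + 1"
      using intersecting_family_without_common_point[OF D SB indep_intersecting[OF D indep] B no_common] .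
    then show False using large by simp
  qed
  then obtain x where x: "x \<in> B" "\<forall>E\<in>S. x \<in> E" by blast
  have "S \<subseteq> T_blocks \<B> x" using SB x(2) unfolding T_blocks_def by auto
  moreover have "card (T_blocks \<B> x) \<le> card S"
    by (rule big0_max_indepD(3)[OF S T_blocks_indep])
  moreover have "finite (T_blocks \<B> x)"
    using steiner_blocks_finite[OF D] unfolding T_blocks_def by simp
  ultimately have "S = T_blocks \<B> x" by (rule card_seteq[rotated])
  moreover have "x \<in> V" using steiner_2_designD(4)[OF D] B SB x(1) by auto
  ultimately show ?thesis by blast
qed

theorem lemma6:
  fixes V :: "'a set" and \<B> :: "'a set set" and k :: nat
  assumes "steiner_2_design k V \<B>"
    and "int (card V) > int k ^ 3 - 2 * int k ^ 2 + 2 * int k"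
  shows "(\<forall>S. big0_max_indep \<B> S \<longrightarrow> (\<exists>x\<in>V. S = T_blocks \<B> x))
         \<and> big0_alpha \<B> = (card V - 1) div (k - 1)"
proof -
  note D = assms(1)
  have k: "1 < k" using steiner_2_designD(2)[OF D] by simp
  have v: "0 < card V" using steiner_2_designD(3)[OF D] by simp
  have "V \<noteq> {}" using v by (intro notI) simp
  then obtain x0 where "x0 \<in> V" by blast
  have r: "card (T_blocks \<B> x0) * (k - 1) = card V - 1"
    by (rule replication_number[OF D \<open>x0 \<in> V\<close>])
  have big: "k * (k - 1) + 1 < card (T_blocks \<B> x0)"
    by (rule replication_exceeds_bound[OF k v r assms(2)])
  have pencils: "\<exists>x\<in>V. S = T_blocks \<B> x" if S: "big0_max_indep \<B> S" for S
  proof -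
    have "card (T_blocks \<B> x0) \<le> card S"
      by (rule big0_max_indepD(3)[OF S T_blocks_indep])
    with big have "k * (k - 1) + 1 < card S" by (rule less_le_trans)
    then show ?thesis by (rule large_max_indep_is_pencil[OF D S])
  qed
  obtain S where S: "big0_max_indep \<B> S" "big0_alpha \<B> = card S"
    using max_indep_exists[OF steiner_blocks_finite[OF D]] .
  obtain x where x: "x \<in> V" "S = T_blocks \<B> x" using pencils[OF S(1)] by blast
  have "card S * (k - 1) = card V - 1" unfolding x(2) by (rule replication_number[OF D x(1)])
  moreover have "card S * (k - 1) div (k - 1) = card S" using k by simp
  ultimately have alpha: "big0_alpha \<B> = (card V - 1) div (k - 1)" using S(2) by simp
  show ?thesis using alpha by (blast intro: pencils)
qed

end
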